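(* Assume values are i.i.d. with a regular distribution $F$ on $[0,\bar v]$ with density $f > 0$, and $2 \le k < n$. Let $\bar R$ be the expected revenue $\mathbb E[\sum_i P_i(\bm v)]$ of any payment rule $P$ that implements the efficient allocation rule (and satisfies interim individual rationality). Then $\bar R < -(n-k)\,\phi(0)$.
   Context: Setting: $n$ risk-neutral unit-demand bidders and $k$ identical items. Values $v_1,\dots,v_n$ are i.i.d. on $[0,\bar v]$ with CDF $F$ and density $f>0$. The virtual value function is $\phi(v) = v - \frac{1-F(v)}{f(v)}$; $F$ is regular if $\phi$ is strictly increasing. The efficient allocation rule gives one item to each of the $k$ bidders with the highest values (ties, a probability-zero event, broken by any fixed rule). For an allocation rule $A$, $x_i(v_i) = \mathbb E[A_i(\bm v)\mid v_i]$ and $z_i(v_i) = v_i x_i(v_i) - \int_0^{v_i} x_i(u)\,du$. A payment rule $P : [0,\bar v]^n \to [0,\infty)^n$ implements $A$ if $(A,P)$ is Bayesian incentive compatible and $\mathbb E[P_i(\bm v)\mid v_i] = z_i(v_i)$ for all $i, v_i$. Interim individual rationality: $\mathbb E[v_iA_i(\bm v) - P_i(\bm v)\mid v_i] \ge 0$ for all $i, v_i$. *)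

theory Defs
  imports "HOL-Probability.Probability"
begin

definition val_dist :: "real \<Rightarrow> (real \<Rightarrow> real) \<Rightarrow> real measure" where
  "val_dist vb f = density lborel (\<lambda>x. ennreal (f x * indicator {0..vb} x))"

definition prof_dist :: "nat \<Rightarrow> real \<Rightarrow> (real \<Rightarrow> real) \<Rightarrow> (nat \<Rightarrow> real) measure" where
  "prof_dist n vb f = PiM {..<n} (\<lambda>_. val_dist vb f)"

definition profiles :: "nat \<Rightarrow> real \<Rightarrow> (nat \<Rightarrow> real) set" where
  "profiles n vb = {v. \<forall>i<n. v i \<in> {0..vb}}"

definition cdf :: "(real \<Rightarrow> real) \<Rightarrow> real \<Rightarrow> real" where
  "cdf f t = integral {0..t} f"

definition virt :: "(real \<Rightarrow> real) \<Rightarrow> real \<Rightarrow> real" where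
  "virt f t = t - (1 - cdf f t) / f t"

text \<open>Efficient allocation: the k highest values win; ties broken by index (lower index wins).\<close>
definition eff_alloc :: "nat \<Rightarrow> nat \<Rightarrow> (nat \<Rightarrow> real) \<Rightarrow> nat \<Rightarrow> real" where
  "eff_alloc n k v i =
     (if card {j\<in>{..<n}. v j > v i \<or> (v j = v i \<and> j < i)} < k then 1 else 0)"

text \<open>Interim expectation E[g(v) | v_i = t]: by independence, integrate g with coordinate i fixed to t.\<close>
definition interim :: "nat \<Rightarrow> real \<Rightarrow> (real \<Rightarrow> real) \<Rightarrow> ((nat \<Rightarrow> real) \<Rightarrow> real) \<Rightarrow> nat \<Rightarrow> real \<Rightarrow> real" where
  "interim n vb f g i t = (\<integral>v. g (v(i := t)) \<partial>prof_dist n vb f)"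

definition x_eff :: "nat \<Rightarrow> nat \<Rightarrow> real \<Rightarrow> (real \<Rightarrow> real) \<Rightarrow> nat \<Rightarrow> real \<Rightarrow> real" where
  "x_eff n k vb f i t = interim n vb f (\<lambda>v. eff_alloc n k v i) i t"

definition z_eff :: "nat \<Rightarrow> nat \<Rightarrow> real \<Rightarrow> (real \<Rightarrow> real) \<Rightarrow> nat \<Rightarrow> real \<Rightarrow> real" where
  "z_eff n k vb f i t = t * x_eff n k vb f i t - integral {0..t} (x_eff n k vb f i)"

text \<open>P implements the efficient allocation rule (BIC, interim payments = z), and is interim IR.\<close>
definition implements_eff_IR ::
  "nat \<Rightarrow> nat \<Rightarrow> real \<Rightarrow> (real \<Rightarrow> real) \<Rightarrow> ((nat \<Rightarrow> real) \<Rightarrow> nat \<Rightarrow> real) \<Rightarrow> bool" where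
  "implements_eff_IR n k vb f P \<longleftrightarrow>
     (\<forall>v\<in>profiles n vb. \<forall>i<n. P v i \<ge> 0) \<and>
     (\<forall>i<n. integrable (prof_dist n vb f) (\<lambda>v. P v i)) \<and>
     (\<forall>i<n. \<forall>t\<in>{0..vb}. integrable (prof_dist n vb f) (\<lambda>v. P (v(i := t)) i)) \<and>
     (\<forall>i<n. \<forall>t\<in>{0..vb}. \<forall>s\<in>{0..vb}.
        t * x_eff n k vb f i t - interim n vb f (\<lambda>v. P v i) i t
        \<ge> t * x_eff n k vb f i s - interim n vb f (\<lambda>v. P v i) i s) \<and>
     (\<forall>i<n. \<forall>t\<in>{0..vb}. interim n vb f (\<lambda>v. P v i) i t = z_eff n k vb f i t) \<and>
     (\<forall>i<n. \<forall>t\<in>{0..vb}. t * x_eff n k vb f i t - interim n vb f (\<lambda>v. P v i) i t \<ge> 0)"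

end

theory Submission
  imports Defs
begin

text \<open>Myerson's payment identity, applied bidder by bidder, turns the expected revenue of any
  implementation of the efficient rule into the expected virtual surplus
  \<open>E[\<Sum>\<^sub>i A\<^sub>i \<phi>(v\<^sub>i)]\<close>. Since the virtual value has mean zero, this equals
  \<open>-E[\<Sum>\<^sub>i (1 - A\<^sub>i) \<phi>(v\<^sub>i)]\<close>, the negated expected sum of the virtual values of the
  \<open>n - k\<close> losers. Almost surely every value is positive, so by regularity every loser has
  \<open>\<phi>(v\<^sub>i) > \<phi>(0)\<close>, and the expected revenue is strictly below \<open>-(n - k) \<phi>(0)\<close>.\<close>

lemma bounded_borel_integrable_Icc:
  fixes X :: "real \<Rightarrow> real"
  assumes [measurable]: "X \<in> borel_measurable borel" and bound: "\<forall>t\<in>{a..b}. \<bar>X t\<bar> \<le> C"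
  shows "set_integrable lborel {a..b} X" "X integrable_on {a..b}"
    "(LINT s:{a..b}|lborel. X s) = integral {a..b} X"
proof -
  show si: "set_integrable lborel {a..b} X"
    unfolding set_integrable_def
    by (rule integrableI_bounded_set[where A="{a..b}" and B=C])
      (use bound in \<open>auto simp: indicator_def emeasure_lborel_Icc_eq\<close>)
  show "X integrable_on {a..b}" "(LINT s:{a..b}|lborel. X s) = integral {a..b} X"
    using set_borel_integral_eq_integral[OF si] by auto
qed

lemma unit_valued_indefinite_integral:
  fixes X :: "real \<Rightarrow> real"
  assumes [measurable]: "X \<in> borel_measurable borel" and X01: "\<And>t. 0 \<le> X t \<and> X t \<le> 1"
  shows "(\<lambda>t. integral {0..t} X) \<in> borel_measurable borel"
    and "0 \<le> t \<Longrightarrow> 0 \<le> integral {0..t} X \<and> integral {0..t} X \<le> t"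
proof -
  have int: "X integrable_on {a..b}" for a b
    using bounded_borel_integrable_Icc(2)[of X a b 1] X01 by auto
  have nonneg: "0 \<le> integral {a..b} X" for a b
    using int X01 by (intro integral_nonneg) auto
  show "0 \<le> t \<Longrightarrow> 0 \<le> integral {0..t} X \<and> integral {0..t} X \<le> t"
    using nonneg integral_le[of X "{0..t}" "\<lambda>_. 1"] int X01 by auto
  have "mono (\<lambda>t. integral {0..t} X)"
  proof (rule monoI)
    fix t t' :: real
    assume "t \<le> t'"
    show "integral {0..t} X \<le> integral {0..t'} X"
    proof (cases "0 \<le> t")
      case True
      then have "integral {0..t} X + integral {t..t'} X = integral {0..t'} X"
        using \<open>t \<le> t'\<close> int by (intro Henstock_Kurzweil_Integration.integral_combine) auto
      then show ?thesis
        using nonneg[of t t'] by linarith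
    qed (use nonneg[of 0 t'] in simp)
  qed
  then show "(\<lambda>t. integral {0..t} X) \<in> borel_measurable borel"
    by (rule borel_measurable_mono)
qed

lemma eff_alloc_0_or_1: "eff_alloc n k v i = 0 \<or> eff_alloc n k v i = 1"
  by (simp add: eff_alloc_def)

lemma card_eff_alloc_winners:
  assumes "k \<le> n"
  shows "card {i\<in>{..<n}. eff_alloc n k v i = 1} = k"
proof -
  define beats where "beats j i \<longleftrightarrow> v j > v i \<or> (v j = v i \<and> j < i)" for j i
  define rank where "rank i = card {j\<in>{..<n}. beats j i}" for i
  \<comment> \<open>The ranks are a permutation of \<open>{..<n}\<close>, and the winners are the bidders of rank below \<open>k\<close>.\<close>
  have rank_less: "rank j < rank i" if "beats j i" "j < n" for i j
  proof -
    have "{l\<in>{..<n}. beats l j} \<subset> {l\<in>{..<n}. beats l i}"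
      using that unfolding beats_def by auto
    then show ?thesis
      unfolding rank_def by (intro psubset_card_mono) auto
  qed
  have inj: "inj_on rank {..<n}"
  proof (rule inj_onI)
    fix i j
    assume "i \<in> {..<n}" "j \<in> {..<n}" "rank i = rank j"
    then show "i = j"
      using rank_less[of i j] rank_less[of j i] unfolding beats_def by fastforce
  qed
  have "rank i < n" if "i < n" for i
  proof -
    have "rank i \<le> card ({..<n} - {i})"
      unfolding rank_def beats_def by (intro card_mono) auto
    then show ?thesis
      using that by auto
  qed
  then have rank_image: "rank ` {..<n} = {..<n}"
    using card_image[OF inj] by (intro card_subset_eq) auto
  have "{i\<in>{..<n}. eff_alloc n k v i = 1} = {i\<in>{..<n}. rank i < k}"
    unfolding eff_alloc_def rank_def beats_def by auto
  moreover have "card {i\<in>{..<n}. rank i < k} = card (rank ` {i\<in>{..<n}. rank i < k})"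
    by (rule card_image[symmetric]) (rule inj_on_subset[OF inj], auto)
  moreover have "rank ` {i\<in>{..<n}. rank i < k} = {..<k}"
    using rank_image assms by (auto simp: image_iff)
  ultimately show ?thesis
    by simp
qed

lemma card_eff_alloc_losers:
  assumes "k \<le> n"
  shows "card {i\<in>{..<n}. eff_alloc n k v i = 0} = n - k"
proof -
  let ?W = "{i\<in>{..<n}. eff_alloc n k v i = 1}"
  have "{i\<in>{..<n}. eff_alloc n k v i = 0} = {..<n} - ?W"
    using eff_alloc_0_or_1 by fastforce
  moreover have "card ({..<n} - ?W) = n - k"
    using card_eff_alloc_winners[OF assms] by (subst card_Diff_subset) auto
  ultimately show ?thesis
    by simp
qed

text \<open>Unfolding the tie-breaking rule into a comparison per index makes every summand measurable.\<close>

lemma eff_alloc_eq_sum: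
  "eff_alloc n k v i =
     (if (\<Sum>j<n. if (if j < i then v i \<le> v j else v i < v j) then 1 else 0 :: real) < k then 1 else 0)"
proof -
  have "{j\<in>{..<n}. v j > v i \<or> (v j = v i \<and> j < i)}
      = {j\<in>{..<n}. if j < i then v i \<le> v j else v i < v j}"
    by auto
  then show ?thesis
    unfolding eff_alloc_def card_eq_sum by (simp add: sum.If_cases Int_def flip: of_nat_sum)
qed

lemma borel_measurable_eff_alloc:
  assumes i: "i < n" and M: "sets M = sets borel"
  shows "(\<lambda>v. eff_alloc n k v i) \<in> borel_measurable (PiM {..<n} (\<lambda>_. M))"
proof -
  have component: "(\<lambda>v. v j) \<in> borel_measurable (PiM {..<n} (\<lambda>_. M))" if "j < n" for j
    using measurable_component_singleton[of j "{..<n}" "\<lambda>_. M"] measurable_cong_sets[OF refl M] that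
    by blast
  have "Measurable.pred (PiM {..<n} (\<lambda>_. M)) (\<lambda>v. if j < i then v i \<le> v j else v i < v j)"
    if "j < n" for j
    using component[OF i] component[OF that]
    by (cases "j < i") (simp_all add: Measurable.pred_def borel_measurable_le borel_measurable_less)
  then show ?thesis
    unfolding eff_alloc_eq_sum by (intro borel_measurable_sum measurable_If) auto
qed

locale value_density =
  fixes vb :: real and f :: "real \<Rightarrow> real"
  assumes vb_pos: "0 < vb"
    and f_measurable[measurable]: "f \<in> borel_measurable borel"
    and f_pos: "\<forall>x\<in>{0..vb}. f x > 0"
    and f_has_integral: "(f has_integral 1) {0..vb}"
begin

definition dens :: "real \<Rightarrow> real" where
  "dens t = f t * indicator {0..vb} t"

lemma borel_measurable_dens[measurable]: "dens \<in> borel_measurable borel"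
  unfolding dens_def by measurable

lemma dens_nonneg: "0 \<le> dens t"
  using f_pos by (auto simp: dens_def indicator_def less_imp_le)

lemma nn_integral_dens: "integral\<^sup>N lborel dens = 1"
proof -
  have "(\<lambda>x. if x \<in> {0..vb} then f x else 0) = dens"
    by (auto simp: dens_def fun_eq_iff)
  then have "(dens has_integral 1) UNIV"
    using f_has_integral has_integral_restrict_UNIV[of "{0..vb}" f 1] by simp
  then show ?thesis
    using nn_integral_has_integral_lborel[OF borel_measurable_dens dens_nonneg] by simp
qed

lemma integrable_dens: "integrable lborel dens"
  by (rule integrableI_nonneg) (auto simp: dens_nonneg nn_integral_dens)

lemma val_dist_eq_density: "val_dist vb f = density lborel (\<lambda>x. ennreal (dens x))"
  by (simp add: val_dist_def dens_def)

lemma sets_val_dist[measurable_cong, simp]: "sets (val_dist vb f) = sets borel"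
  by (simp add: val_dist_eq_density)

lemma space_val_dist[simp]: "space (val_dist vb f) = UNIV"
  by (simp add: val_dist_eq_density)

lemma prob_space_val_dist: "prob_space (val_dist vb f)"
proof
  have "emeasure (val_dist vb f) (space (val_dist vb f))
      = (\<integral>\<^sup>+ x. ennreal (dens x) * indicator UNIV x \<partial>lborel)"
    unfolding val_dist_eq_density by (subst emeasure_density) auto
  then show "emeasure (val_dist vb f) (space (val_dist vb f)) = 1"
    using nn_integral_dens by simp
qed

lemma AE_val_dist_pos: "AE t in val_dist vb f. t \<in> {0<..vb}"
proof -
  have "AE t in lborel. dens t \<noteq> 0 \<longrightarrow> t \<in> {0<..vb}"
    using AE_lborel_singleton[of 0] by eventually_elim (auto simp: dens_def indicator_def)
  then show ?thesis
    unfolding val_dist_eq_density by (subst AE_density) auto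
qed

lemma bounded_integral_val_dist:
  assumes [measurable]: "h \<in> borel_measurable borel" and bound: "\<forall>t\<in>{0..vb}. \<bar>h t\<bar> \<le> B"
  shows "integrable (val_dist vb f) h"
    and "integral\<^sup>L (val_dist vb f) h = integral {0..vb} (\<lambda>t. f t * h t)"
    and "(\<lambda>t. f t * h t) integrable_on {0..vb}"
    and "(\<integral>x. dens x * h x \<partial>lborel) = integral {0..vb} (\<lambda>t. f t * h t)"
proof -
  have "0 \<le> B"
    using bound[rule_format, of 0] vb_pos by auto
  have int: "integrable lborel (\<lambda>x. dens x *\<^sub>R h x)"
  proof (rule Bochner_Integration.integrable_bound)
    show "integrable lborel (\<lambda>x. B * dens x)"
      using integrable_dens by simp
    show "(\<lambda>x. dens x *\<^sub>R h x) \<in> borel_measurable lborel"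
      by measurable
    show "AE x in lborel. norm (dens x *\<^sub>R h x) \<le> norm (B * dens x)"
      using bound dens_nonneg \<open>0 \<le> B\<close>
      by (intro AE_I2) (auto simp: dens_def indicator_def abs_mult mult.commute[of B] intro!: mult_left_mono)
  qed
  show "integrable (val_dist vb f) h"
    unfolding val_dist_eq_density by (subst integrable_density) (use int in \<open>auto simp: dens_nonneg\<close>)
  have restrict: "(\<lambda>x. dens x *\<^sub>R h x) = (\<lambda>x. indicator {0..vb} x *\<^sub>R (f x * h x))"
    by (auto simp: dens_def fun_eq_iff)
  have set_int: "set_integrable lborel {0..vb} (\<lambda>x. f x * h x)"
    unfolding set_integrable_def using int restrict by simp
  have lborel_eq: "(\<integral>x. dens x *\<^sub>R h x \<partial>lborel) = integral {0..vb} (\<lambda>t. f t * h t)"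
    unfolding restrict using set_borel_integral_eq_integral(2)[OF set_int]
    unfolding set_lebesgue_integral_def .
  then show "(\<integral>x. dens x * h x \<partial>lborel) = integral {0..vb} (\<lambda>t. f t * h t)"
    by simp
  show "integral\<^sup>L (val_dist vb f) h = integral {0..vb} (\<lambda>t. f t * h t)"
    unfolding val_dist_eq_density using lborel_eq by (subst integral_density) (auto simp: dens_nonneg)
  show "(\<lambda>t. f t * h t) integrable_on {0..vb}"
    using set_borel_integral_eq_integral(1)[OF set_int] .
qed

text \<open>Composing with \<open>clip\<close> extends the CDF and the virtual value constantly outside
  \<open>[0, vb]\<close>; the extensions are monotone, hence Borel measurable on all of \<open>\<real>\<close>.\<close>

definition clip :: "real \<Rightarrow> real" where
  "clip t = max 0 (min vb t)"

lemma clip_mem: "clip t \<in> {0..vb}"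
  using vb_pos by (auto simp: clip_def)

lemma clip_eq: "t \<in> {0..vb} \<Longrightarrow> clip t = t"
  by (auto simp: clip_def)

lemma mono_clip: "mono clip"
  by (auto simp: clip_def mono_def)

lemma f_integrable_on: "0 \<le> a \<Longrightarrow> b \<le> vb \<Longrightarrow> f integrable_on {a..b}"
  using f_has_integral by (intro integrable_on_subinterval[OF has_integral_integrable]) auto

lemma cdf_add_tail: "0 \<le> s \<Longrightarrow> s \<le> vb \<Longrightarrow> cdf f s + integral {s..vb} f = 1"
  unfolding cdf_def using f_has_integral f_integrable_on[of 0 vb]
  by (simp add: Henstock_Kurzweil_Integration.integral_combine integral_unique)

lemma cdf_mono: "0 \<le> a \<Longrightarrow> a \<le> b \<Longrightarrow> b \<le> vb \<Longrightarrow> cdf f a \<le> cdf f b"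
proof -
  assume ab: "0 \<le> a" "a \<le> b" "b \<le> vb"
  have "integral {0..a} f + integral {a..b} f = integral {0..b} f"
    using ab f_integrable_on[of 0 b] by (intro Henstock_Kurzweil_Integration.integral_combine) auto
  moreover have "0 \<le> integral {a..b} f"
    using ab f_integrable_on[of a b] f_pos by (intro integral_nonneg) (auto intro: less_imp_le)
  ultimately show ?thesis
    unfolding cdf_def by linarith
qed

lemma cdf_bounds: "0 \<le> s \<Longrightarrow> s \<le> vb \<Longrightarrow> 0 \<le> cdf f s \<and> cdf f s \<le> 1"
  using cdf_mono[of 0 s] cdf_mono[of s vb] cdf_add_tail[of vb] by (simp add: cdf_def)

lemma borel_measurable_cdf_clip[measurable]: "(\<lambda>t. cdf f (clip t)) \<in> borel_measurable borel"
  using mono_clip clip_mem by (intro borel_measurable_mono) (auto intro!: cdf_mono simp: mono_def)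

lemma integral_dens_tail:
  assumes "s \<in> {0..vb}"
  shows "(\<integral>t. dens t * indicator {s..} t \<partial>lborel) = 1 - cdf f s"
proof -
  have "(\<integral>t. dens t * indicator {s..} t \<partial>lborel) = integral {0..vb} (\<lambda>t. f t * indicator {s..} t)"
    by (rule bounded_integral_val_dist(4)[of _ 1]) (auto simp: indicator_def)
  also have "\<dots> = integral ({s..} \<inter> {0..vb}) f"
    by (subst integral_restrict_Int[symmetric]) (auto simp: indicator_def intro!: integral_cong)
  also have "{s..} \<inter> {0..vb} = {s..vb}"
    using assms by auto
  finally show ?thesis
    using cdf_add_tail[of s] assms by simp
qed

lemma integrable_dens_times_indicator:
  "integrable (lborel \<Otimes>\<^sub>M lborel) (\<lambda>x. dens (fst x) * indicator {0..vb} (snd x))"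
proof (rule integrableI_nonneg)
  have "(\<integral>\<^sup>+x. ennreal (dens (fst x) * indicator {0..vb} (snd x)) \<partial>(lborel \<Otimes>\<^sub>M lborel))
      = (\<integral>\<^sup>+t. \<integral>\<^sup>+s. ennreal (dens t) * indicator {0..vb} s \<partial>lborel \<partial>lborel)"
    by (subst lborel.nn_integral_fst[symmetric]) (auto intro!: nn_integral_cong simp: indicator_def)
  also have "\<dots> = (\<integral>\<^sup>+t. ennreal (dens t) \<partial>lborel) * ennreal vb"
    using vb_pos by (simp add: nn_integral_cmult nn_integral_multc)
  finally show "(\<integral>\<^sup>+x. ennreal (dens (fst x) * indicator {0..vb} (snd x)) \<partial>(lborel \<Otimes>\<^sub>M lborel)) < \<infinity>"
    using nn_integral_dens by simp
qed (auto simp: dens_nonneg)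

lemma integral_indefinite_integral_swap:
  assumes X_meas[measurable]: "X \<in> borel_measurable borel" and X01: "\<And>t. 0 \<le> X t \<and> X t \<le> 1"
  shows "integral {0..vb} (\<lambda>t. f t * integral {0..t} X) = integral {0..vb} (\<lambda>s. X s * (1 - cdf f s))"
proof -
  define A where "A t = integral {0..t} X" for t
  have [measurable]: "A \<in> borel_measurable borel"
    using unit_valued_indefinite_integral(1)[OF X_meas X01] unfolding A_def .
  have A_bound: "\<forall>t\<in>{0..vb}. \<bar>A t\<bar> \<le> vb"
    using unit_valued_indefinite_integral(2)[OF X_meas X01] unfolding A_def by fastforce
  \<comment> \<open>Fubini on the triangle \<open>0 \<le> s \<le> t\<close>: integrating out \<open>s\<close> gives \<open>f A\<close>, integrating out \<open>t\<close> gives \<open>X (1 - F)\<close>.\<close>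
  define K where "K x = dens (fst x) * (if 0 \<le> snd x \<and> snd x \<le> fst x then X (snd x) else 0)"
    for x :: "real \<times> real"
  have [measurable]: "K \<in> borel_measurable (lborel \<Otimes>\<^sub>M lborel)"
    unfolding K_def by measurable
  have "norm (K x) \<le> norm (dens (fst x) * indicator {0..vb} (snd x))" for x
    using X01[of "snd x"] dens_nonneg[of "fst x"]
    by (cases x) (auto simp: K_def dens_def indicator_def abs_mult intro!: mult_left_le)
  then have K_int: "integrable (lborel \<Otimes>\<^sub>M lborel) K"
    by (intro Bochner_Integration.integrable_bound[OF integrable_dens_times_indicator]) auto
  have inner_snd: "(\<integral>s. K (t, s) \<partial>lborel) = dens t * A t" for t
  proof -
    have "(\<integral>s. K (t, s) \<partial>lborel) = (\<integral>s. dens t * (indicator {0..t} s *\<^sub>R X s) \<partial>lborel)"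
      by (rule Bochner_Integration.integral_cong) (auto simp: K_def indicator_def)
    also have "\<dots> = dens t * (LINT s:{0..t}|lborel. X s)"
      unfolding set_lebesgue_integral_def by simp
    also have "\<dots> = dens t * A t"
      using bounded_borel_integrable_Icc(3)[of X 0 t 1] X01 by (simp add: A_def)
    finally show ?thesis .
  qed
  have inner_fst: "(\<integral>t. K (t, s) \<partial>lborel) = indicator {0..vb} s * (X s * (1 - cdf f (clip s)))" for s
  proof (cases "s \<in> {0..vb}")
    case True
    have "(\<integral>t. K (t, s) \<partial>lborel) = (\<integral>t. X s * (dens t * indicator {s..} t) \<partial>lborel)"
      using True by (intro Bochner_Integration.integral_cong) (auto simp: K_def indicator_def)
    then show ?thesis
      using True integral_dens_tail clip_eq by simp
  next
    case False
    then have "K (t, s) = 0" for t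
      by (auto simp: K_def dens_def)
    then show ?thesis
      using False by simp
  qed
  have "integral {0..vb} (\<lambda>t. f t * A t) = (\<integral>t. \<integral>s. K (t, s) \<partial>lborel \<partial>lborel)"
    using bounded_integral_val_dist(4)[of A vb] A_bound inner_snd by simp
  also have "\<dots> = (\<integral>s. \<integral>t. K (t, s) \<partial>lborel \<partial>lborel)"
    using lborel_pair.Fubini_integral[of "\<lambda>t s. K (t, s)"] K_int by simp
  also have "\<dots> = (LINT s:{0..vb}|lborel. X s * (1 - cdf f (clip s)))"
    unfolding set_lebesgue_integral_def inner_fst by simp
  also have "\<dots> = integral {0..vb} (\<lambda>s. X s * (1 - cdf f (clip s)))"
    using X01 cdf_bounds clip_mem
    by (intro bounded_borel_integrable_Icc(3)[of _ _ _ 1]) (auto simp: abs_mult intro!: mult_le_one)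
  also have "\<dots> = integral {0..vb} (\<lambda>s. X s * (1 - cdf f s))"
    by (rule integral_cong) (simp add: clip_eq)
  finally show ?thesis
    by (simp add: A_def)
qed

lemma integrable_on_times_survival:
  assumes [measurable]: "X \<in> borel_measurable borel" and X01: "\<And>t. 0 \<le> X t \<and> X t \<le> 1"
  shows "(\<lambda>s. X s * (1 - cdf f s)) integrable_on {0..vb}"
proof -
  have "(\<lambda>s. X s * (1 - cdf f (clip s))) integrable_on {0..vb}"
    using X01 cdf_bounds clip_mem
    by (intro bounded_borel_integrable_Icc(2)[of _ _ _ 1]) (auto simp: abs_mult intro!: mult_le_one)
  then show ?thesis
    by (rule integrable_eq) (simp add: clip_eq)
qed

text \<open>Myerson's payment identity in expectation (integration by parts).\<close>

lemma integral_envelope_payment_eq_virtual_surplus: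
  assumes X_meas[measurable]: "X \<in> borel_measurable borel" and X01: "\<And>t. 0 \<le> X t \<and> X t \<le> 1"
  shows "integral {0..vb} (\<lambda>t. f t * (t * X t - integral {0..t} X))
       = integral {0..vb} (\<lambda>t. f t * (X t * virt f t))"
proof -
  have "\<bar>t * X t\<bar> \<le> vb" if "t \<in> {0..vb}" for t
    using X01[of t] that mult_left_mono[of "X t" 1 t] by auto
  then have int_value: "(\<lambda>t. f t * (t * X t)) integrable_on {0..vb}"
    by (intro bounded_integral_val_dist(3)[where B=vb]) auto
  have "\<bar>integral {0..t} X\<bar> \<le> vb" if "t \<in> {0..vb}" for t
    using unit_valued_indefinite_integral(2)[OF X_meas X01] that by fastforce
  then have int_rent: "(\<lambda>t. f t * integral {0..t} X) integrable_on {0..vb}"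
    using unit_valued_indefinite_integral(1)[OF X_meas X01] by (intro bounded_integral_val_dist(3)[where B=vb]) auto
  have "integral {0..vb} (\<lambda>t. f t * (t * X t - integral {0..t} X))
      = integral {0..vb} (\<lambda>t. f t * (t * X t)) - integral {0..vb} (\<lambda>t. f t * integral {0..t} X)"
    using int_value int_rent by (simp add: right_diff_distrib integral_diff)
  also have "\<dots> = integral {0..vb} (\<lambda>t. f t * (t * X t)) - integral {0..vb} (\<lambda>s. X s * (1 - cdf f s))"
    using integral_indefinite_integral_swap[OF X_meas X01] by simp
  also have "\<dots> = integral {0..vb} (\<lambda>t. f t * (t * X t) - X t * (1 - cdf f t))"
    using int_value integrable_on_times_survival[OF X_meas X01] by (simp add: integral_diff)
  also have "\<dots> = integral {0..vb} (\<lambda>t. f t * (X t * virt f t))"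
  proof (rule integral_cong)
    fix t
    assume "t \<in> {0..vb}"
    then have "f t > 0"
      using f_pos by auto
    then show "f t * (t * X t) - X t * (1 - cdf f t) = f t * (X t * virt f t)"
      by (simp add: virt_def field_simps)
  qed
  finally show ?thesis .
qed

end

locale iid_values = value_density +
  fixes n :: nat
begin

abbreviation Val :: "real measure" where
  "Val \<equiv> val_dist vb f"

abbreviation Prof :: "(nat \<Rightarrow> real) measure" where
  "Prof \<equiv> prof_dist n vb f"

lemma prof_dist_eq_PiM: "Prof = PiM {..<n} (\<lambda>_. Val)"
  by (simp add: prof_dist_def)

lemma prob_space_prof_dist: "prob_space Prof"
  unfolding prof_dist_eq_PiM by (rule prob_space_PiM) (rule prob_space_val_dist)

lemma measurable_component_prof_dist: "i < n \<Longrightarrow> (\<lambda>v. v i) \<in> borel_measurable Prof"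
  using measurable_component_singleton[of i "{..<n}" "\<lambda>_. Val"]
    measurable_cong_sets[OF refl sets_val_dist] unfolding prof_dist_eq_PiM by blast

lemma measurable_fun_upd_prof_dist:
  assumes "i < n" and "sets N = sets borel"
  shows "(\<lambda>x. (snd x)(i := fst x)) \<in> measurable (N \<Otimes>\<^sub>M Prof) Prof"
  unfolding prof_dist_eq_PiM
proof (rule measurable_fun_upd[where J="{..<n}"])
  show "fst \<in> measurable (N \<Otimes>\<^sub>M Pi\<^sub>M {..<n} (\<lambda>_. Val)) Val"
    using assms(2) by (intro measurable_compose[OF measurable_fst measurable_ident_sets]) simp
qed (use assms(1) in auto)

lemma measurable_fun_upd_const_prof_dist: "i < n \<Longrightarrow> (\<lambda>v. v(i := t)) \<in> measurable Prof Prof"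
  unfolding prof_dist_eq_PiM by (rule measurable_fun_upd[where J="{..<n}"]) auto

lemma borel_measurable_eff_alloc_prof_dist:
  "i < n \<Longrightarrow> (\<lambda>v. eff_alloc n k v i) \<in> borel_measurable Prof"
  using borel_measurable_eff_alloc[OF _ sets_val_dist] unfolding prof_dist_eq_PiM .

lemma integrable_prof_dist_bounded:
  fixes B :: real
  assumes "g \<in> borel_measurable Prof" and "\<And>v. \<bar>g v\<bar> \<le> B"
  shows "integrable Prof g"
proof -
  interpret prob_space Prof
    by (rule prob_space_prof_dist)
  show ?thesis
    using assms by (intro integrable_const_bound[where B=B]) auto
qed

text \<open>Resampling coordinate \<open>i\<close> leaves the product measure unchanged, so the
  expectation factors through the interim expectation.\<close>

lemma integral_prof_dist_eq_interim:
  assumes i: "i < n" and g: "integrable Prof g"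
  shows "integral\<^sup>L Prof g = (\<integral>t. interim n vb f g i t \<partial>Val)"
proof -
  interpret Val: prob_space Val
    by (rule prob_space_val_dist)
  interpret Prof: prob_space Prof
    by (rule prob_space_prof_dist)
  interpret pair_prob_space Val Prof ..
  let ?upd = "\<lambda>x. (snd x)(i := fst x)"
  have upd_meas: "?upd \<in> measurable (Val \<Otimes>\<^sub>M Prof) Prof"
    using i by (intro measurable_fun_upd_prof_dist) auto
  have distr_upd: "distr (Val \<Otimes>\<^sub>M Prof) Prof ?upd = Prof"
    using distr_pair_PiM_eq_PiM[of "{..<n}" "\<lambda>_. Val" i] prob_space_val_dist i
    by (simp add: prof_dist_eq_PiM insert_absorb split_beta')
  have g_meas: "g \<in> borel_measurable Prof"
    using g by simp
  have "integral\<^sup>L Prof g = (\<integral>x. g (?upd x) \<partial>(Val \<Otimes>\<^sub>M Prof))"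
    using integral_distr[OF upd_meas g_meas] distr_upd by simp
  also have "\<dots> = (\<integral>t. \<integral>v. g (v(i := t)) \<partial>Prof \<partial>Val)"
    using integral_fst'[of "\<lambda>x. g (?upd x)"] g distr_upd integrable_distr_eq[OF upd_meas g_meas]
    by simp
  finally show ?thesis
    unfolding interim_def .
qed

lemma AE_prof_dist_component: "i < n \<Longrightarrow> AE t in Val. Q t \<Longrightarrow> AE v in Prof. Q (v i)"
  unfolding prof_dist_eq_PiM by (rule AE_PiM_component) (auto simp: prob_space_val_dist)

lemma borel_measurable_interim:
  assumes i: "i < n" and [measurable]: "g \<in> borel_measurable Prof"
  shows "interim n vb f g i \<in> borel_measurable borel"
proof -
  interpret prob_space Prof
    by (rule prob_space_prof_dist)
  have "(\<lambda>x. g ((snd x)(i := fst x))) \<in> borel_measurable (borel \<Otimes>\<^sub>M Prof)"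
    using measurable_fun_upd_prof_dist[OF i, of borel] by measurable
  then show ?thesis
    unfolding interim_def by (intro borel_measurable_lebesgue_integral) (simp add: split_beta')
qed

lemma borel_measurable_x_eff: "i < n \<Longrightarrow> x_eff n k vb f i \<in> borel_measurable borel"
  unfolding x_eff_def by (rule borel_measurable_interim[OF _ borel_measurable_eff_alloc_prof_dist])

lemma x_eff_bounds:
  assumes i: "i < n"
  shows "0 \<le> x_eff n k vb f i t \<and> x_eff n k vb f i t \<le> 1"
proof -
  interpret prob_space Prof
    by (rule prob_space_prof_dist)
  have "(\<lambda>v. eff_alloc n k (v(i := t)) i) \<in> borel_measurable Prof"
    using measurable_compose[OF measurable_fun_upd_const_prof_dist[OF i] borel_measurable_eff_alloc_prof_dist[OF i]]
    by simp
  then have "integrable Prof (\<lambda>v. eff_alloc n k (v(i := t)) i)"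
    by (rule integrable_prof_dist_bounded[where B=1]) (simp add: eff_alloc_def)
  then have "x_eff n k vb f i t \<le> 1"
    unfolding x_eff_def interim_def by (rule integral_le_const) (simp add: eff_alloc_def)
  moreover have "0 \<le> x_eff n k vb f i t"
    unfolding x_eff_def interim_def by (rule Bochner_Integration.integral_nonneg) (simp add: eff_alloc_def)
  ultimately show ?thesis
    by simp
qed

lemma expected_payment_eq_virtual_surplus:
  assumes i: "i < n" and P: "implements_eff_IR n k vb f P"
  shows "(\<integral>v. P v i \<partial>Prof) = integral {0..vb} (\<lambda>t. f t * (x_eff n k vb f i t * virt f t))"
proof -
  let ?x = "x_eff n k vb f i" and ?p = "interim n vb f (\<lambda>v. P v i) i"
  have P_int: "integrable Prof (\<lambda>v. P v i)"
    using P i by (simp add: implements_eff_IR_def)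
  have p_eq: "?p t = z_eff n k vb f i t" if "t \<in> {0..vb}" for t
    using P i that by (simp add: implements_eff_IR_def)
  note x_meas = borel_measurable_x_eff[OF i, of k] and x01 = x_eff_bounds[OF i, of k]
  have p_meas: "?p \<in> borel_measurable borel"
    using borel_measurable_interim[OF i] P_int by simp
  have p_bound: "\<bar>?p t\<bar> \<le> vb" if t: "t \<in> {0..vb}" for t
  proof -
    have "0 \<le> t * ?x t \<and> t * ?x t \<le> t"
      using t x01[of t] mult_left_mono[of "?x t" 1 t] by auto
    then show ?thesis
      using p_eq[OF t] t unit_valued_indefinite_integral(2)[OF x_meas x01, of t]
      unfolding z_eff_def by auto
  qed
  have "(\<integral>v. P v i \<partial>Prof) = (\<integral>t. ?p t \<partial>Val)"
    by (rule integral_prof_dist_eq_interim[OF i P_int])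
  also have "\<dots> = integral {0..vb} (\<lambda>t. f t * ?p t)"
    using p_bound by (intro bounded_integral_val_dist(2)[OF p_meas, where B=vb]) auto
  also have "\<dots> = integral {0..vb} (\<lambda>t. f t * (t * ?x t - integral {0..t} ?x))"
    by (rule integral_cong) (simp add: p_eq z_eff_def)
  also have "\<dots> = integral {0..vb} (\<lambda>t. f t * (?x t * virt f t))"
    by (rule integral_envelope_payment_eq_virtual_surplus[OF x_meas x01])
  finally show ?thesis .
qed

end

locale regular_iid_values = iid_values +
  assumes regular: "strict_mono_on {0..vb} (virt f)"
begin

definition virt_ext :: "real \<Rightarrow> real" where
  "virt_ext t = virt f (clip t)"

lemma virt_ext_bounds: "virt f 0 \<le> virt_ext t \<and> virt_ext t \<le> virt f vb"
  using clip_mem[of t] vb_pos by (auto simp: virt_ext_def intro!: strict_mono_on_leD[OF regular])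

lemma abs_virt_ext_le: "\<bar>virt_ext t\<bar> \<le> \<bar>virt f 0\<bar> + \<bar>virt f vb\<bar>"
  using virt_ext_bounds[of t] by linarith

lemma borel_measurable_virt_ext[measurable]: "virt_ext \<in> borel_measurable borel"
  using mono_clip clip_mem by (intro borel_measurable_mono) (auto simp: mono_def virt_ext_def intro!: strict_mono_on_leD[OF regular])

lemma integrable_virt_ext_component:
  assumes i: "i < n" and [measurable]: "g \<in> borel_measurable Prof" and g01: "\<And>v. \<bar>g v\<bar> \<le> 1"
  shows "integrable Prof (\<lambda>v. g v * virt_ext (v i))"
proof (rule integrable_prof_dist_bounded)
  show "(\<lambda>v. g v * virt_ext (v i)) \<in> borel_measurable Prof"
    using measurable_component_prof_dist[OF i] by measurable
  show "\<bar>g v * virt_ext (v i)\<bar> \<le> \<bar>virt f 0\<bar> + \<bar>virt f vb\<bar>" for v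
    using g01[of v] abs_virt_ext_le mult_mono[of "\<bar>g v\<bar>" 1 "\<bar>virt_ext (v i)\<bar>"] by (simp add: abs_mult)
qed

lemma integral_eff_alloc_virt_ext:
  assumes i: "i < n"
  shows "(\<integral>v. eff_alloc n k v i * virt_ext (v i) \<partial>Prof)
       = integral {0..vb} (\<lambda>t. f t * (x_eff n k vb f i t * virt f t))"
proof -
  note x_meas = borel_measurable_x_eff[OF i, of k] and x01 = x_eff_bounds[OF i, of k]
  have "integrable Prof (\<lambda>v. eff_alloc n k v i * virt_ext (v i))"
    using borel_measurable_eff_alloc_prof_dist[OF i]
    by (rule integrable_virt_ext_component[OF i]) (simp add: eff_alloc_def)
  then have "(\<integral>v. eff_alloc n k v i * virt_ext (v i) \<partial>Prof) = (\<integral>t. x_eff n k vb f i t * virt_ext t \<partial>Val)"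
    by (simp add: integral_prof_dist_eq_interim[OF i] interim_def x_eff_def)
  also have "\<dots> = integral {0..vb} (\<lambda>t. f t * (x_eff n k vb f i t * virt_ext t))"
  proof (rule bounded_integral_val_dist(2)[where B="\<bar>virt f 0\<bar> + \<bar>virt f vb\<bar>"])
    show "\<forall>t\<in>{0..vb}. \<bar>x_eff n k vb f i t * virt_ext t\<bar> \<le> \<bar>virt f 0\<bar> + \<bar>virt f vb\<bar>"
      using x01 abs_virt_ext_le mult_mono[of "\<bar>x_eff n k vb f i _\<bar>" 1 "\<bar>virt_ext _\<bar>"]
      by (simp add: abs_mult)
  qed (use x_meas in measurable)
  also have "\<dots> = integral {0..vb} (\<lambda>t. f t * (x_eff n k vb f i t * virt f t))"
    by (rule integral_cong) (simp add: virt_ext_def clip_eq)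
  finally show ?thesis .
qed

text \<open>The envelope payment of the constant allocation \<open>1\<close> vanishes.\<close>

lemma integral_virt_ext_component:
  assumes i: "i < n"
  shows "(\<integral>v. virt_ext (v i) \<partial>Prof) = 0"
proof -
  interpret prob_space Prof
    by (rule prob_space_prof_dist)
  have "integrable Prof (\<lambda>v. 1 * virt_ext (v i))"
    by (rule integrable_virt_ext_component[OF i]) auto
  then have "(\<integral>v. virt_ext (v i) \<partial>Prof) = (\<integral>t. virt_ext t \<partial>Val)"
    by (simp add: integral_prof_dist_eq_interim[OF i] interim_def prob_space)
  also have "\<dots> = integral {0..vb} (\<lambda>t. f t * virt_ext t)"
    using abs_virt_ext_le by (intro bounded_integral_val_dist(2)) auto
  also have "\<dots> = integral {0..vb} (\<lambda>t. f t * ((\<lambda>_. 1) t * virt f t))"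
    by (rule integral_cong) (simp add: virt_ext_def clip_eq)
  also have "\<dots> = integral {0..vb} (\<lambda>t. f t * (t * (\<lambda>_. 1) t - integral {0..t} (\<lambda>_. 1)))"
    by (rule integral_envelope_payment_eq_virtual_surplus[symmetric]) auto
  also have "\<dots> = integral {0..vb} (\<lambda>_. 0)"
    by (rule integral_cong) simp
  finally show ?thesis
    by simp
qed

lemma sum_virt_ext_losers_less:
  assumes kn: "k < n" and pos: "\<forall>j<n. v j \<in> {0<..vb}"
  shows "(\<Sum>i<n. (eff_alloc n k v i - 1) * virt_ext (v i)) < - (real n - real k) * virt f 0"
proof -
  define L where "L = {i\<in>{..<n}. eff_alloc n k v i = 0}"
  have "(\<Sum>i<n. (eff_alloc n k v i - 1) * virt_ext (v i))
      = (\<Sum>i<n. if eff_alloc n k v i = 0 then - virt_ext (v i) else 0)"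
    using eff_alloc_0_or_1 by (intro sum.cong) auto
  also have "\<dots> = (\<Sum>i\<in>L. - virt_ext (v i))"
    unfolding L_def by (rule sum.inter_filter[symmetric]) simp
  finally have losers: "(\<Sum>i<n. (eff_alloc n k v i - 1) * virt_ext (v i)) = - (\<Sum>i\<in>L. virt_ext (v i))"
    by (simp add: sum_negf)
  have card_L: "card L = n - k"
    unfolding L_def using kn by (intro card_eff_alloc_losers) simp
  have "virt f 0 < virt_ext (v i)" if "i \<in> L" for i
  proof -
    have "v i \<in> {0<..vb}"
      using that pos unfolding L_def by auto
    then show ?thesis
      using regular vb_pos by (auto simp: virt_ext_def clip_eq strict_mono_on_def)
  qed
  moreover have "L \<noteq> {}"
    using card_L kn by auto
  ultimately have "(\<Sum>i\<in>L. virt f 0) < (\<Sum>i\<in>L. virt_ext (v i))"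
    by (intro sum_strict_mono) (auto simp: L_def)
  moreover have "(\<Sum>i\<in>L. virt f 0) = (real n - real k) * virt f 0"
    using card_L kn by (simp add: of_nat_diff)
  ultimately show ?thesis
    unfolding losers minus_mult_left by linarith
qed

lemma expected_revenue_eq_losers_virtual_values:
  assumes P: "implements_eff_IR n k vb f P"
  shows "(\<integral>v. (\<Sum>i<n. P v i) \<partial>Prof) = (\<integral>v. (\<Sum>i<n. (eff_alloc n k v i - 1) * virt_ext (v i)) \<partial>Prof)"
proof -
  have int_alloc: "integrable Prof (\<lambda>v. eff_alloc n k v i * virt_ext (v i))" if "i < n" for i
    using borel_measurable_eff_alloc_prof_dist[OF that]
    by (rule integrable_virt_ext_component[OF that]) (simp add: eff_alloc_def)
  have int_virt: "integrable Prof (\<lambda>v. virt_ext (v i))" if "i < n" for i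
    using integrable_virt_ext_component[OF that, of "\<lambda>_. 1"] by simp
  have "(\<integral>v. (\<Sum>i<n. P v i) \<partial>Prof) = (\<Sum>i<n. \<integral>v. P v i \<partial>Prof)"
    using Bochner_Integration.integral_sum[of "{..<n}" Prof "\<lambda>i v. P v i"] P
    by (simp add: implements_eff_IR_def)
  also have "\<dots> = (\<Sum>i<n. (\<integral>v. eff_alloc n k v i * virt_ext (v i) \<partial>Prof) - (\<integral>v. virt_ext (v i) \<partial>Prof))"
    using P by (intro sum.cong)
      (simp_all add: expected_payment_eq_virtual_surplus integral_eff_alloc_virt_ext integral_virt_ext_component)
  also have "\<dots> = (\<Sum>i<n. \<integral>v. (eff_alloc n k v i - 1) * virt_ext (v i) \<partial>Prof)"
    using int_alloc int_virt by (intro sum.cong) (simp_all add: left_diff_distrib)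
  also have "\<dots> = (\<integral>v. (\<Sum>i<n. (eff_alloc n k v i - 1) * virt_ext (v i)) \<partial>Prof)"
    using int_alloc int_virt by (intro Bochner_Integration.integral_sum[symmetric]) (simp add: left_diff_distrib)
  finally show ?thesis .
qed

lemma expected_revenue_less:
  assumes kn: "k < n" and P: "implements_eff_IR n k vb f P"
  shows "(\<integral>v. (\<Sum>i<n. P v i) \<partial>Prof) < - (real n - real k) * virt f 0"
proof -
  interpret prob_space Prof
    by (rule prob_space_prof_dist)
  let ?Y = "\<lambda>v. \<Sum>i<n. (eff_alloc n k v i - 1) * virt_ext (v i)"
  have "integrable Prof (\<lambda>v. (eff_alloc n k v i - 1) * virt_ext (v i))" if i: "i < n" for i
  proof (rule integrable_virt_ext_component[OF i])
    show "(\<lambda>v. eff_alloc n k v i - 1) \<in> borel_measurable Prof"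
      using borel_measurable_eff_alloc_prof_dist[OF i] by (rule borel_measurable_diff) simp
  qed (simp add: eff_alloc_def)
  then have "integrable Prof ?Y"
    by (intro Bochner_Integration.integrable_sum) simp
  moreover have "AE v in Prof. \<forall>j\<in>{..<n}. v j \<in> {0<..vb}"
    using AE_prof_dist_component[OF _ AE_val_dist_pos] by (intro AE_finite_allI) auto
  then have "AE v in Prof. ?Y v < - (real n - real k) * virt f 0"
    by eventually_elim (rule sum_virt_ext_losers_less[OF kn], simp)
  ultimately have "integral\<^sup>L Prof ?Y < integral\<^sup>L Prof (\<lambda>_. - (real n - real k) * virt f 0)"
    by (intro integral_less_AE_space) (auto simp: emeasure_space_1)
  then show ?thesis
    using expected_revenue_eq_losers_virtual_values[OF P] by (simp add: prob_space)
qed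

end

theorem mainTheorem11:
  fixes n k :: nat and vb :: real and f :: "real \<Rightarrow> real"
    and P :: "(nat \<Rightarrow> real) \<Rightarrow> nat \<Rightarrow> real"
  assumes "2 \<le> k" and "k < n" and "0 < vb"
    and "f \<in> borel_measurable borel"
    and "\<forall>x\<in>{0..vb}. f x > 0"
    and "(f has_integral 1) {0..vb}"
    and "strict_mono_on {0..vb} (virt f)"
    and "implements_eff_IR n k vb f P"
  shows "(\<integral>v. (\<Sum>i<n. P v i) \<partial>prof_dist n vb f) < - (real n - real k) * virt f 0"
proof -
  interpret regular_iid_values vb f n
    using assms(3-7) by unfold_locales
  show ?thesis
    using expected_revenue_less[OF assms(2,8)] .
qed

end
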